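(* Let $m,v,x,s>0$ and $u,w\in\mathbb{R}$ with $w\geq 0$. Let $\mathfrak{n}$ be the five-dimensional real Lie algebra with basis $\{E_1,\dots,E_5\}$ whose only non-vanishing brackets (up to antisymmetry) are $$[E_1,E_2]=mE_3+sE_4+uE_5,\qquad [E_1,E_3]=vE_4+wE_5,\qquad [E_1,E_4]=xE_5.$$ Equip the corresponding simply connected nilpotent Lie group with the left-invariant Riemannian metric for which $\{E_1,\dots,E_5\}$ is orthonormal. Then this metric is not an algebraic Ricci soliton.
   Context: Let $G$ be a Lie group with Lie algebra $\mathfrak{g}$ and let $g$ be a left-invariant Riemannian metric on $G$. Let $\mathrm{Ric}$ denote the $(1,1)$ Ricci tensor of $g$, viewed as a linear endomorphism of $\mathfrak{g}$. The metric $g$ is an algebraic Ricci soliton if there are a real number $c$ and a derivation $D$ of $\mathfrak{g}$ such that $\mathrm{Ric}=c\,\mathrm{Id}+D$. *)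

theory Defs
  imports "HOL-Analysis.Analysis" "HOL-Library.Numeral_Type"
begin

text \<open>A real Lie algebra on R^n given by structure constants with respect to the
standard basis: C i j k is the coefficient of e_k in [e_i, e_j]. The left-invariant
metric is the one for which the standard basis is orthonormal, i.e. the standard
inner product.\<close>

definition lie_br :: "('n::finite \<Rightarrow> 'n \<Rightarrow> 'n \<Rightarrow> real) \<Rightarrow> real^'n \<Rightarrow> real^'n \<Rightarrow> real^'n" where
  "lie_br C X Y = (\<chi> k. \<Sum>i\<in>UNIV. \<Sum>j\<in>UNIV. X$i * Y$j * C i j k)"

definition ebas :: "'n::finite \<Rightarrow> real^'n" where
  "ebas i = axis i 1"

text \<open>Levi-Civita connection on left-invariant fields (Koszul formula):
 2 <nabla_X Y, Z> = <[X,Y],Z> - <[Y,Z],X> + <[Z,X],Y>.\<close>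
definition lc_conn :: "('n::finite \<Rightarrow> 'n \<Rightarrow> 'n \<Rightarrow> real) \<Rightarrow> real^'n \<Rightarrow> real^'n \<Rightarrow> real^'n" where
  "lc_conn C X Y = (\<Sum>k\<in>UNIV. ((1/2) * (inner (lie_br C X Y) (ebas k)
        - inner (lie_br C Y (ebas k)) X + inner (lie_br C (ebas k) X) Y)) *\<^sub>R ebas k)"

definition riem :: "('n::finite \<Rightarrow> 'n \<Rightarrow> 'n \<Rightarrow> real) \<Rightarrow> real^'n \<Rightarrow> real^'n \<Rightarrow> real^'n \<Rightarrow> real^'n" where
  "riem C X Y Z = lc_conn C X (lc_conn C Y Z) - lc_conn C Y (lc_conn C X Z)
                  - lc_conn C (lie_br C X Y) Z"

definition ric :: "('n::finite \<Rightarrow> 'n \<Rightarrow> 'n \<Rightarrow> real) \<Rightarrow> real^'n \<Rightarrow> real^'n \<Rightarrow> real" where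
  "ric C X Y = (\<Sum>i\<in>UNIV. inner (riem C (ebas i) X Y) (ebas i))"

definition Ric_op :: "('n::finite \<Rightarrow> 'n \<Rightarrow> 'n \<Rightarrow> real) \<Rightarrow> real^'n \<Rightarrow> real^'n" where
  "Ric_op C X = (\<Sum>j\<in>UNIV. ric C X (ebas j) *\<^sub>R ebas j)"

definition is_derivation :: "('n::finite \<Rightarrow> 'n \<Rightarrow> 'n \<Rightarrow> real) \<Rightarrow> (real^'n \<Rightarrow> real^'n) \<Rightarrow> bool" where
  "is_derivation C D \<longleftrightarrow> linear D \<and>
     (\<forall>X Y. D (lie_br C X Y) = lie_br C (D X) Y + lie_br C X (D Y))"

definition algebraic_ricci_soliton :: "('n::finite \<Rightarrow> 'n \<Rightarrow> 'n \<Rightarrow> real) \<Rightarrow> bool" where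
  "algebraic_ricci_soliton C \<longleftrightarrow>
     (\<exists>c D. is_derivation C D \<and> (\<forall>X. Ric_op C X = c *\<^sub>R X + D X))"

text \<open>The five-dimensional algebra: basis E_1..E_5 are the elements 1,2,3,4,5 of type 5
(5 = 0 in this type; the five are distinct).\<close>
definition n5_const :: "real \<Rightarrow> real \<Rightarrow> real \<Rightarrow> real \<Rightarrow> real \<Rightarrow> real \<Rightarrow> 5 \<Rightarrow> 5 \<Rightarrow> 5 \<Rightarrow> real" where
  "n5_const m v x s u w i j k =
    (if (i,j) = (1,2) then (if k = 3 then m else if k = 4 then s else if k = 5 then u else 0)
     else if (i,j) = (2,1) then (if k = 3 then -m else if k = 4 then -s else if k = 5 then -u else 0)
     else if (i,j) = (1,3) then (if k = 4 then v else if k = 5 then w else 0)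
     else if (i,j) = (3,1) then (if k = 4 then -v else if k = 5 then -w else 0)
     else if (i,j) = (1,4) then (if k = 5 then x else 0)
     else if (i,j) = (4,1) then (if k = 5 then -x else 0)
     else 0)"

end

theory Submission
  imports Defs
begin

text \<open>If \<open>Ric = c Id + D\<close> with \<open>D\<close> a derivation, then \<open>D = Ric - c Id\<close>, and the Leibniz rule
  for \<open>D\<close> on pairs of basis vectors becomes a system of polynomial identities between the
  structure constants and the Ricci entries \<open>r\<^sub>i\<^sub>j = ric(E\<^sub>i, E\<^sub>j)\<close>, which are computed from the
  Koszul formula. Three of these identities already conflict with the sign hypotheses:
  the \<open>E\<^sub>3\<close>-component for the pair \<open>(E\<^sub>1, E\<^sub>4)\<close> gives \<open>m u x = 0\<close>, hence \<open>u = 0\<close>; then the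
  \<open>E\<^sub>3\<close>-component for \<open>(E\<^sub>1, E\<^sub>3)\<close> gives \<open>w x = 2 m s\<close>, hence \<open>w > 0\<close>; and finally the
  \<open>E\<^sub>5\<close>-component for \<open>(E\<^sub>1, E\<^sub>2)\<close> gives \<open>s v w = 0\<close>.\<close>

lemma UNIV_5: "(UNIV :: 5 set) = {1, 2, 3, 4, 5}"
proof -
  have "i \<in> {1, 2, 3, 4, 5}" for i :: 5
  proof (cases i rule: bit1_cases)
    case (of_int z)
    then have "z < 5" by simp
    then have "z = 0 \<or> z = 1 \<or> z = 2 \<or> z = 3 \<or> z = 4" using of_int by linarith
    with of_int show ?thesis by (elim disjE) simp_all
  qed
  then show ?thesis by blast
qed

lemma sum_UNIV_5: "sum f (UNIV :: 5 set) = f 1 + f 2 + f 3 + f 4 + f 5"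
  unfolding UNIV_5 by (simp add: add.assoc)

definition christoffel :: "('n::finite \<Rightarrow> 'n \<Rightarrow> 'n \<Rightarrow> real) \<Rightarrow> 'n \<Rightarrow> 'n \<Rightarrow> 'n \<Rightarrow> real" where
  "christoffel C i j k = (C i j k - C j k i + C k i j) / 2"

lemma ebas_component: "ebas i $ j = (if j = i then 1 else 0)"
  by (simp add: ebas_def axis_def)

lemma inner_ebas_right: "inner v (ebas k) = v $ k"
  by (simp add: ebas_def inner_axis)

lemma lie_br_component: "lie_br C X Y $ k = (\<Sum>i\<in>UNIV. \<Sum>j\<in>UNIV. X$i * Y$j * C i j k)"
  by (simp add: lie_br_def)

lemma lie_br_ebas_left: "lie_br C (ebas i) Y $ k = (\<Sum>j\<in>UNIV. Y$j * C i j k)"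
  unfolding lie_br_component
  by (subst sum.swap) (simp add: ebas_component if_distrib[of "\<lambda>t. t * _"] cong: if_cong)

lemma lie_br_ebas_right: "lie_br C X (ebas j) $ k = (\<Sum>i\<in>UNIV. X$i * C i j k)"
  by (simp add: lie_br_component ebas_component if_distrib[of "\<lambda>t. _ * t"]
      if_distrib[of "\<lambda>t. t * _"] cong: if_cong)

lemma lie_br_ebas: "lie_br C (ebas i) (ebas j) $ k = C i j k"
  by (simp add: lie_br_ebas_left ebas_component if_distrib[of "\<lambda>t. t * _"] cong: if_cong)

lemma inner_lie_br_ebas_right:
  "inner (lie_br C Y (ebas k)) X = (\<Sum>i\<in>UNIV. \<Sum>j\<in>UNIV. X$i * Y$j * C j k i)"
  by (simp only: inner_vec_def inner_real_def lie_br_ebas_right sum_distrib_right) (simp add: mult_ac)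

lemma inner_lie_br_ebas_left:
  "inner (lie_br C (ebas k) X) Y = (\<Sum>i\<in>UNIV. \<Sum>j\<in>UNIV. X$i * Y$j * C k i j)"
proof -
  have "inner (lie_br C (ebas k) X) Y = (\<Sum>j\<in>UNIV. \<Sum>i\<in>UNIV. X$i * Y$j * C k i j)"
    by (simp only: inner_vec_def inner_real_def lie_br_ebas_left sum_distrib_right) (simp add: mult_ac)
  also have "\<dots> = (\<Sum>i\<in>UNIV. \<Sum>j\<in>UNIV. X$i * Y$j * C k i j)"
    by (rule sum.swap)
  finally show ?thesis .
qed

lemma lc_conn_component:
  "lc_conn C X Y $ k = (\<Sum>i\<in>UNIV. \<Sum>j\<in>UNIV. X$i * Y$j * christoffel C i j k)"
proof -
  have "lc_conn C X Y $ k
      = (lie_br C X Y $ k - inner (lie_br C Y (ebas k)) X + inner (lie_br C (ebas k) X) Y) / 2"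
    by (simp add: lc_conn_def sum_component ebas_component inner_ebas_right
        if_distrib[of "\<lambda>t. _ * t"] cong: if_cong)
  moreover have "X$i * Y$j * christoffel C i j k
      = (X$i * Y$j * C i j k - X$i * Y$j * C j k i + X$i * Y$j * C k i j) / 2" for i j
    by (simp add: christoffel_def algebra_simps)
  ultimately show ?thesis
    by (simp only: lie_br_component inner_lie_br_ebas_left inner_lie_br_ebas_right
        sum_divide_distrib[symmetric] sum_subtractf sum.distrib)
qed

lemma lc_conn_ebas_left: "lc_conn C (ebas i) Y $ k = (\<Sum>j\<in>UNIV. Y$j * christoffel C i j k)"
  unfolding lc_conn_component
  by (subst sum.swap) (simp add: ebas_component if_distrib[of "\<lambda>t. t * _"] cong: if_cong)

lemma lc_conn_ebas_right: "lc_conn C X (ebas j) $ k = (\<Sum>i\<in>UNIV. X$i * christoffel C i j k)"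
  by (simp add: lc_conn_component ebas_component if_distrib[of "\<lambda>t. _ * t"]
      if_distrib[of "\<lambda>t. t * _"] cong: if_cong)

lemma lc_conn_ebas: "lc_conn C (ebas i) (ebas j) $ k = christoffel C i j k"
  by (simp add: lc_conn_ebas_left ebas_component if_distrib[of "\<lambda>t. t * _"] cong: if_cong)

lemma riem_ebas:
  "riem C (ebas i) (ebas a) (ebas b) $ k = (\<Sum>j\<in>UNIV.
     christoffel C a b j * christoffel C i j k - christoffel C i b j * christoffel C a j k
     - C i a j * christoffel C j b k)"
proof -
  have "lc_conn C (ebas i) (lc_conn C (ebas a) (ebas b)) $ k
      = (\<Sum>j\<in>UNIV. christoffel C a b j * christoffel C i j k)"
    unfolding lc_conn_ebas_left[of C i] lc_conn_ebas ..
  moreover have "lc_conn C (ebas a) (lc_conn C (ebas i) (ebas b)) $ k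
      = (\<Sum>j\<in>UNIV. christoffel C i b j * christoffel C a j k)"
    unfolding lc_conn_ebas_left[of C a] lc_conn_ebas ..
  moreover have "lc_conn C (lie_br C (ebas i) (ebas a)) (ebas b) $ k
      = (\<Sum>j\<in>UNIV. C i a j * christoffel C j b k)"
    unfolding lc_conn_ebas_right lie_br_ebas ..
  ultimately show ?thesis
    by (simp add: riem_def sum_subtractf)
qed

lemma ric_ebas:
  "ric C (ebas a) (ebas b) = (\<Sum>i\<in>UNIV. \<Sum>j\<in>UNIV.
     christoffel C a b j * christoffel C i j i - christoffel C i b j * christoffel C a j i
     - C i a j * christoffel C j b i)"
  by (simp add: ric_def inner_ebas_right riem_ebas)

lemma Ric_op_component: "Ric_op C X $ k = ric C X (ebas k)"
  by (simp add: Ric_op_def sum_component ebas_component if_distrib[of "\<lambda>t. _ * t"] cong: if_cong)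

lemma lie_br_ebas_expansion: "lie_br C (ebas i) (ebas j) = (\<Sum>l\<in>UNIV. C i j l *\<^sub>R ebas l)"
  by (simp add: vec_eq_iff sum_component lie_br_ebas ebas_component
      if_distrib[of "\<lambda>t. _ * t"] cong: if_cong)

lemma is_derivation_ebas:
  assumes "is_derivation C D"
  shows "(\<Sum>l\<in>UNIV. C i j l * D (ebas l) $ k)
       = (\<Sum>l\<in>UNIV. D (ebas i) $ l * C l j k) + (\<Sum>l\<in>UNIV. D (ebas j) $ l * C i l k)"
proof -
  have "linear D"
    and "D (lie_br C (ebas i) (ebas j)) = lie_br C (D (ebas i)) (ebas j) + lie_br C (ebas i) (D (ebas j))"
    using assms by (auto simp: is_derivation_def)
  then have "(\<Sum>l\<in>UNIV. C i j l *\<^sub>R D (ebas l))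
      = lie_br C (D (ebas i)) (ebas j) + lie_br C (ebas i) (D (ebas j))"
    by (simp add: lie_br_ebas_expansion linear_sum linear_scale)
  from arg_cong[where f = "\<lambda>X. X $ k", OF this] show ?thesis
    by (simp add: sum_component lie_br_ebas_left lie_br_ebas_right mult.commute)
qed

lemma algebraic_ricci_soliton_ebas:
  assumes "algebraic_ricci_soliton C"
  obtains c where
    "\<And>i j k. (\<Sum>l\<in>UNIV. C i j l * ric C (ebas l) (ebas k)) + c * C i j k
       = (\<Sum>l\<in>UNIV. ric C (ebas i) (ebas l) * C l j k)
         + (\<Sum>l\<in>UNIV. ric C (ebas j) (ebas l) * C i l k)"
proof -
  obtain c D where der: "is_derivation C D" and Ric: "\<And>X. Ric_op C X = c *\<^sub>R X + D X"
    using assms unfolding algebraic_ricci_soliton_def by blast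
  have D_ebas: "D (ebas i) $ k = ric C (ebas i) (ebas k) - c * ebas i $ k" for i k
    using arg_cong[where f = "\<lambda>X. X $ k", OF Ric[of "ebas i"]] by (simp add: Ric_op_component)
  show ?thesis
  proof
    fix i j k
    show "(\<Sum>l\<in>UNIV. C i j l * ric C (ebas l) (ebas k)) + c * C i j k
       = (\<Sum>l\<in>UNIV. ric C (ebas i) (ebas l) * C l j k)
         + (\<Sum>l\<in>UNIV. ric C (ebas j) (ebas l) * C i l k)"
      using is_derivation_ebas[OF der, of i j k]
      by (simp add: D_ebas ebas_component right_diff_distrib left_diff_distrib sum_subtractf
          if_distrib[of "\<lambda>t. _ * t"] if_distrib[of "\<lambda>t. t * _"] cong: if_cong)
  qed
qed

lemma n5_const_ric:
  fixes m v x s u w :: real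
  defines "C \<equiv> n5_const m v x s u w"
  shows "ric C (ebas 2) (ebas 3) = - (s * v + u * w) / 2"
    and "ric C (ebas 2) (ebas 4) = - u * x / 2"
    and "ric C (ebas 3) (ebas 2) = - (s * v + u * w) / 2"
    and "ric C (ebas 3) (ebas 5) = m * u / 2"
    and "ric C (ebas 4) (ebas 2) = - u * x / 2"
    and "ric C (ebas 4) (ebas 3) = (m * s - w * x) / 2"
    and "ric C (ebas 4) (ebas 5) = (s * u + v * w) / 2"
    and "ric C (ebas 5) (ebas 3) = m * u / 2"
  unfolding C_def ric_ebas sum_UNIV_5 christoffel_def n5_const_def
  by (simp_all add: field_simps)

theorem mainTheorem5:
  fixes m v x s u w :: real
  assumes "m > 0" "v > 0" "x > 0" "s > 0" "w \<ge> 0"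
  shows "\<not> algebraic_ricci_soliton (n5_const m v x s u w)"
proof
  let ?C = "n5_const m v x s u w"
  assume "algebraic_ricci_soliton ?C"
  then obtain c where soliton:
    "\<And>i j k. (\<Sum>l\<in>UNIV. ?C i j l * ric ?C (ebas l) (ebas k)) + c * ?C i j k
      = (\<Sum>l\<in>UNIV. ric ?C (ebas i) (ebas l) * ?C l j k)
        + (\<Sum>l\<in>UNIV. ric ?C (ebas j) (ebas l) * ?C i l k)"
    by (rule algebraic_ricci_soliton_ebas) blast
  have "x * (m * u / 2) = m * (- u * x / 2)"
    using soliton[of 1 4 3] by (simp add: sum_UNIV_5 n5_const_def n5_const_ric)
  then have u: "u = 0"
    using assms by (simp add: algebra_simps)
  have "v * ((m * s - w * x) / 2) = m * (- (s * v) / 2)"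
    using soliton[of 1 3 3] by (simp add: sum_UNIV_5 n5_const_def n5_const_ric u)
  then have "w * x = 2 * m * s"
    using assms by (simp add: algebra_simps)
  then have "w > 0"
    using assms by (metis less_eq_real_def mult_eq_0_iff mult_pos_pos zero_less_numeral)
  moreover have "s * (v * w / 2) = w * (- (s * v) / 2)"
    using soliton[of 1 2 5] by (simp add: sum_UNIV_5 n5_const_def n5_const_ric u)
  ultimately show False
    using assms by (simp add: algebra_simps)
qed

end
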